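(* Let $X$ be a time-homogeneous Markov chain on $\mathbf{R}$ with transition kernel $P$, initial distribution $\mu_0$ and renewal measure $U=\sum_{n\ge0}\mu_0P^n$, such that $\sup_{y\in\mathbf{R}}\sum_{n\ge0}P^n(y,(k,k+1])<\infty$ for every $k\in\mathbf{Z}$. Assume that $\xi(x)\Rightarrow\xi$ as $x\to\infty$, where $\xi$ has distribution $F$; that there is $\eta$ with $\mathbf{E}\eta<\infty$ and $|\xi(x)|\le_{\rm st}\eta$ for all $x$; and that $\sup_{k\in\mathbf{Z}}U(k,k+1]<\infty$. Let $t_n\to\infty$ be a sequence such that the measures $U(t_n+\cdot)$ converge vaguely to a measure $\lambda$ on $\mathbf{R}$ (i.e. $\int f(x)\,U(t_n+dx)\to\int f\,d\lambda$ for every continuous compactly supported $f$). Then $\lambda=\lambda*F$.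
   Context: $\xi(x)$ denotes a random variable with $\mathbf{P}\{x+\xi(x)\in B\}=P(x,B)$; $\mu_0$ is the law of $X_0$; $U(t+B)$ means $U(\{t+b:b\in B\})$. $|\xi(x)|\le_{\rm st}\eta$ means $\mathbf{P}\{|\xi(x)|>t\}\le\mathbf{P}\{\eta>t\}$ for all $t$. $(\lambda*F)(B)=\int F(B-y)\,\lambda(dy)$. *)

theory Defs
  imports "HOL-Probability.Probability"
begin

primrec kpow :: "(real \<Rightarrow> real measure) \<Rightarrow> nat \<Rightarrow> real \<Rightarrow> real measure" where
  "kpow P 0 x = return borel x"
| "kpow P (Suc n) x = P x \<bind> (\<lambda>y. kpow P n y)"

definition law_at :: "real measure \<Rightarrow> (real \<Rightarrow> real measure) \<Rightarrow> nat \<Rightarrow> real measure" where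
  "law_at mu0 P n = mu0 \<bind> (\<lambda>x. kpow P n x)"

definition renewal :: "real measure \<Rightarrow> (real \<Rightarrow> real measure) \<Rightarrow> real measure" where
  "renewal mu0 P = measure_of UNIV (sets borel) (\<lambda>B. \<Sum>n. emeasure (law_at mu0 P n) B)"

text \<open>shifted measure U(t + .): B \<mapsto> U({t+b : b in B})\<close>
definition shift_measure :: "real measure \<Rightarrow> real \<Rightarrow> real measure" where
  "shift_measure U t = distr U borel (\<lambda>x. x - t)"

definition conv_meas :: "real measure \<Rightarrow> real measure \<Rightarrow> real set \<Rightarrow> ennreal" where
  "conv_meas lam F B = (\<integral>\<^sup>+ y. emeasure F ((\<lambda>b. b - y) ` B) \<partial>lam)"

end

theory Submission
  imports Defs
begin

(* The proof tests lambda against continuous, nonnegative, compactly supported g.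
   By the renewal equation U = mu0 + U P,
     U(g(. - s)) = mu0(g(. - s)) + U(gP s),    gP s y = E g(y + xi(y) - s).
   For s = t_n the first term vanishes.  Weak convergence xi(y) => xi holds uniformly
   in the (compactly ranging) shift, so gP s y is close to gF(y - s), where
   gF(x) = E g(x + xi); far from s both functions are bounded by the summable tail of
   eta, and U gives uniformly bounded mass to unit intervals, so
   U(gP s) - U(gF(. - s)) -> 0.  Finally U(gF(. - t_n)) -> lambda(gF), again by
   truncating the tail.  Hence lambda(g) = lambda(gF) = (lambda * F)(g).  Letting g
   increase to indicators of open intervals identifies lambda with lambda * F. *)


lemma emeasure_unit_interval_le:
  fixes N :: "real measure"
  assumes N: "sets N = sets borel"
    and C: "\<And>k::int. emeasure N {real_of_int k<..real_of_int k + 1} \<le> C"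
  shows "emeasure N {a..a+1} \<le> 3 * C"
proof -
  define I where "I k = {real_of_int k<..real_of_int k + 1}" for k :: int
  define k where "k = \<lfloor>a\<rfloor>"
  have I[simp]: "I j \<in> sets N" for j by (simp add: I_def N)
  have "{a..a+1} \<subseteq> (I (k - 1) \<union> I k) \<union> I (k + 1)"
    unfolding k_def I_def by (auto simp: of_int_diff of_int_add) linarith+
  then have "emeasure N {a..a+1} \<le> emeasure N ((I (k - 1) \<union> I k) \<union> I (k + 1))"
    by (rule emeasure_mono) (intro sets.Un I)
  also have "\<dots> \<le> (emeasure N (I (k - 1)) + emeasure N (I k)) + emeasure N (I (k + 1))"
    by (intro order_trans[OF emeasure_subadditive] add_mono emeasure_subadditive) auto
  also have "\<dots> \<le> (C + C) + C" by (intro add_mono) (simp_all only: I_def C)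
  also have "\<dots> = (1 + 1 + 1) * C" by (simp only: distrib_right mult_1)
  finally show ?thesis by simp
qed

lemma nn_integral_distance_bands:
  fixes N :: "real measure" and \<phi> :: "real \<Rightarrow> ennreal"
  assumes N: "sets N = sets borel" and D: "\<And>a. emeasure N {a..a+1} \<le> D"
    and bd: "\<And>x. \<phi> x \<le> \<beta> (nat \<lfloor>\<bar>x - c\<bar>\<rfloor>)"
  shows "(\<integral>\<^sup>+x. \<phi> x \<partial>N) \<le> 2 * D * (\<Sum>m. \<beta> m)"
proof -
  define S where "S m = {x. real m \<le> \<bar>x - c\<bar> \<and> \<bar>x - c\<bar> < real m + 1}" for m :: nat
  have S[measurable]: "S m \<in> sets borel" for m unfolding S_def by measurable
  have "\<phi> x \<le> (\<Sum>m. \<beta> m * indicator (S m) x)" for x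
  proof -
    let ?m = "nat \<lfloor>\<bar>x - c\<bar>\<rfloor>"
    have "\<phi> x \<le> \<beta> ?m * indicator (S ?m) x" using bd[of x] by (simp add: S_def)
    also have "\<dots> \<le> (\<Sum>m. \<beta> m * indicator (S m) x)"
    proof -
      have "(\<Sum>m\<in>{?m}. \<beta> m * indicator (S m) x) \<le> (\<Sum>m. \<beta> m * indicator (S m) x)"
        by (rule sum_le_suminf) auto
      then show ?thesis
        by (simp only: finite.emptyI empty_iff not_False_eq_True sum.insert sum.empty add_0_right)
    qed
    finally show ?thesis .
  qed
  then have "(\<integral>\<^sup>+x. \<phi> x \<partial>N) \<le> (\<integral>\<^sup>+x. (\<Sum>m. \<beta> m * indicator (S m) x) \<partial>N)"
    by (intro nn_integral_mono) auto
  also have "\<dots> = (\<Sum>m. \<integral>\<^sup>+x. \<beta> m * indicator (S m) x \<partial>N)"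
    by (rule nn_integral_suminf) (simp add: N measurable_cong_sets[OF N refl])
  also have "\<dots> = (\<Sum>m. \<beta> m * emeasure N (S m))"
    by (intro suminf_cong nn_integral_cmult_indicator) (simp add: N)
  also have "\<dots> \<le> (\<Sum>m. \<beta> m * (2 * D))"
  proof (intro suminf_le mult_left_mono)
    fix m
    have "S m \<subseteq> {c + real m .. c + real m + 1} \<union> {c - real m - 1 .. (c - real m - 1) + 1}"
      unfolding S_def by auto
    then have "emeasure N (S m) \<le> emeasure N ({c + real m .. c + real m + 1} \<union> {c - real m - 1 .. (c - real m - 1) + 1})"
      by (rule emeasure_mono) (simp add: N)
    also have "\<dots> \<le> emeasure N {c + real m .. c + real m + 1} + emeasure N {c - real m - 1 .. (c - real m - 1) + 1}"
      by (rule emeasure_subadditive) (auto simp: N)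
    also have "\<dots> \<le> D + D" by (intro add_mono D)
    finally show "emeasure N (S m) \<le> 2 * D" by (simp add: mult_2)
  qed auto
  finally show ?thesis by (simp add: mult.commute)
qed

lemma integrable_distance_bands:
  fixes N :: "real measure" and \<phi> :: "real \<Rightarrow> real" and D :: real
  assumes N: "sets N = sets borel" and D: "\<And>a. emeasure N {a..a+1} \<le> ennreal D" and D0: "0 \<le> D"
    and phi: "\<phi> \<in> borel_measurable borel" and bd: "\<And>x. \<bar>\<phi> x\<bar> \<le> \<beta> (nat \<lfloor>\<bar>x - c\<bar>\<rfloor>)"
    and b0: "\<And>m. 0 \<le> \<beta> m" and bs: "summable \<beta>"
  shows "integrable N \<phi>" "\<bar>\<integral>x. \<phi> x \<partial>N\<bar> \<le> 2 * D * (\<Sum>m. \<beta> m)"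
proof -
  have "(\<integral>\<^sup>+x. ennreal (norm (\<phi> x)) \<partial>N) \<le> 2 * ennreal D * (\<Sum>m. ennreal (\<beta> m))"
    by (rule nn_integral_distance_bands[OF N D, where c=c]) (auto intro: ennreal_leI bd)
  also have "\<dots> = ennreal (2 * D * (\<Sum>m. \<beta> m))"
    using b0 bs D0 by (simp add: suminf_ennreal2 ennreal_mult suminf_nonneg)
  finally have I: "(\<integral>\<^sup>+x. ennreal (norm (\<phi> x)) \<partial>N) \<le> ennreal (2 * D * (\<Sum>m. \<beta> m))" .
  show int: "integrable N \<phi>"
    using I by (intro integrableI_bounded)
      (auto simp: measurable_cong_sets[OF N refl] phi top_unique intro: le_less_trans)
  have "ennreal (norm (\<integral>x. \<phi> x \<partial>N)) \<le> ennreal (2 * D * (\<Sum>m. \<beta> m))"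
    using integral_norm_bound_ennreal[OF int] I by (rule order_trans)
  then show "\<bar>\<integral>x. \<phi> x \<partial>N\<bar> \<le> 2 * D * (\<Sum>m. \<beta> m)"
    using b0 bs D0 by (subst (asm) ennreal_le_iff) (auto intro!: mult_nonneg_nonneg suminf_nonneg)
qed

lemma integral_near_far_bound:
  fixes N :: "real measure" and \<phi> :: "real \<Rightarrow> real" and D :: real
  assumes N: "sets N = sets borel" and D: "\<And>a. emeasure N {a..a+1} \<le> ennreal D" and D0: "0 \<le> D"
    and phi: "\<phi> \<in> borel_measurable borel"
    and near: "\<And>x. \<bar>x - c\<bar> < real A \<Longrightarrow> \<bar>\<phi> x\<bar> \<le> e" and e0: "0 \<le> e"
    and far: "\<And>x. real A \<le> \<bar>x - c\<bar> \<Longrightarrow> \<bar>\<phi> x\<bar> \<le> b (nat \<lfloor>\<bar>x - c\<bar>\<rfloor>)"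
    and b0: "\<And>m. 0 \<le> b m" and bs: "summable b"
  shows "integrable N \<phi>" "\<bar>\<integral>x. \<phi> x \<partial>N\<bar> \<le> 2 * D * (real A * e + (\<Sum>m. b (m + A)))"
proof -
  define \<beta> where "\<beta> m = (if m < A then e else b m)" for m
  have bd: "\<bar>\<phi> x\<bar> \<le> \<beta> (nat \<lfloor>\<bar>x - c\<bar>\<rfloor>)" for x
  proof (cases "\<bar>x - c\<bar> < real A")
    case True
    then show ?thesis using near[OF True] by (simp add: \<beta>_def) linarith
  next
    case False
    then show ?thesis using far[of x] by (simp add: \<beta>_def) linarith
  qed
  have \<beta>0: "0 \<le> \<beta> m" for m using e0 b0 by (simp add: \<beta>_def)
  have "summable (\<lambda>m. \<beta> (m + A))" using bs by (simp add: \<beta>_def)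
  then have \<beta>s: "summable \<beta>" by (rule summable_iff_shift[THEN iffD1])
  have "(\<Sum>m. \<beta> m) = (\<Sum>m. \<beta> (m + A)) + (\<Sum>m<A. \<beta> m)"
    by (rule suminf_split_initial_segment[OF \<beta>s])
  also have "\<dots> = real A * e + (\<Sum>m. b (m + A))" by (simp add: \<beta>_def)
  finally have sum\<beta>: "(\<Sum>m. \<beta> m) = real A * e + (\<Sum>m. b (m + A))" .
  show "integrable N \<phi>" "\<bar>\<integral>x. \<phi> x \<partial>N\<bar> \<le> 2 * D * (real A * e + (\<Sum>m. b (m + A)))"
    using integrable_distance_bands[OF N D D0 phi bd \<beta>0 \<beta>s] by (simp_all add: sum\<beta>)
qed

lemma prob_integral_abs_le:
  fixes f :: "'a \<Rightarrow> real"
  assumes N: "prob_space N" and f: "f \<in> borel_measurable N" and b: "\<And>x. x \<in> space N \<Longrightarrow> \<bar>f x\<bar> \<le> e"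
  shows "integrable N f" "\<bar>\<integral>x. f x \<partial>N\<bar> \<le> e"
proof -
  interpret prob_space N by (rule N)
  show int: "integrable N f"
    by (rule integrable_const_bound[where B=e]) (auto simp: f b)
  have "\<bar>\<integral>x. f x \<partial>N\<bar> \<le> (\<integral>x. \<bar>f x\<bar> \<partial>N)" by (rule integral_abs_bound)
  also have "\<dots> \<le> (\<integral>x. e \<partial>N)" by (rule integral_mono) (auto simp: int b)
  also have "\<dots> = e" by (simp add: prob_space)
  finally show "\<bar>\<integral>x. f x \<partial>N\<bar> \<le> e" .
qed

lemma prob_average_shift_close:
  fixes g :: "real \<Rightarrow> real" and f :: "'a \<Rightarrow> real"
  assumes N: "prob_space N" and f: "f \<in> borel_measurable N"
    and g: "g \<in> borel_measurable borel" and gG: "\<And>x. \<bar>g x\<bar> \<le> G"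
    and d: "\<And>a b. \<bar>a - b\<bar> < d \<Longrightarrow> \<bar>g a - g b\<bar> < e" and close: "\<bar>s - s'\<bar> < d"
  shows "\<bar>(\<integral>z. g (s + f z) \<partial>N) - (\<integral>z. g (s' + f z) \<partial>N)\<bar> \<le> e"
proof -
  note [measurable] = f g
  have int: "integrable N (\<lambda>z. g (a + f z))" for a
    by (rule prob_integral_abs_le(1)[OF N, where e=G]) (auto simp: gG f)
  have "\<bar>\<integral>z. g (s + f z) - g (s' + f z) \<partial>N\<bar> \<le> e"
    using close by (intro prob_integral_abs_le(2)[OF N] less_imp_le d) (auto simp: f)
  then show ?thesis by (simp add: int)
qed

lemma grid_point_close:
  fixes A d s :: real
  assumes d: "0 < d" and s: "\<bar>s\<bar> \<le> A"
  shows "\<exists>i \<le> nat \<lceil>2 * A / d\<rceil>. \<bar>s - (- A + real i * d)\<bar> < d"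
proof (intro exI conjI)
  define i where "i = nat \<lfloor>(s + A) / d\<rfloor>"
  have q0: "0 \<le> (s + A) / d" using s d by simp
  have "(s + A) / d \<le> 2 * A / d" using s d by (simp add: divide_right_mono)
  then show "i \<le> nat \<lceil>2 * A / d\<rceil>" unfolding i_def by (intro nat_mono) linarith
  have "real i = of_int \<lfloor>(s + A) / d\<rfloor>" unfolding i_def using q0 by simp
  then have "real i \<le> (s + A) / d" "(s + A) / d < real i + 1" by linarith+
  then have "real i * d \<le> s + A" "s + A < real i * d + d" using d by (simp_all add: field_simps)
  then show "\<bar>s - (- A + real i * d)\<bar> < d" by simp
qed

lemma tendsto_zero_two_parameters:
  fixes x T :: "nat \<Rightarrow> real"
  assumes T: "T \<longlonglongrightarrow> 0" and C: "0 \<le> C"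
    and bound: "\<And>A e. 0 < e \<Longrightarrow> \<forall>\<^sub>F n in sequentially. \<bar>x n\<bar> \<le> C * (real A * e + T A)"
  shows "x \<longlonglongrightarrow> 0"
proof (rule LIMSEQ_I)
  fix r :: real assume r: "0 < r"
  have C1: "0 < C + 1" using C by simp
  obtain A where A: "\<bar>T A\<bar> < r / (2 * (C + 1))"
    using LIMSEQ_D[OF T, of "r / (2 * (C + 1))"] r C1 by auto
  define K where "K = (C + 1) * (real A + 1)"
  have K: "0 < K" using C1 by (simp add: K_def)
  define e where "e = r / (2 * K)"
  have e: "0 < e" using r K by (simp add: e_def)
  have "C * (real A * e) \<le> (C + 1) * ((real A + 1) * e)"
    using C e by (intro mult_mono) auto
  also have "\<dots> = K * e" by (simp add: K_def mult.assoc)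
  also have "\<dots> = r / 2" using K by (simp add: e_def)
  finally have 1: "C * (real A * e) \<le> r / 2" .
  have "C * T A \<le> C * \<bar>T A\<bar>" using C by (intro mult_left_mono) auto
  also have "\<dots> \<le> (C + 1) * \<bar>T A\<bar>" by (intro mult_right_mono) auto
  also have "\<dots> < r / 2" using A C1 by (simp add: field_simps)
  finally have 2: "C * T A < r / 2" .
  from bound[OF e, of A] obtain N where "\<And>n. N \<le> n \<Longrightarrow> \<bar>x n\<bar> \<le> C * (real A * e + T A)"
    by (auto simp: eventually_sequentially)
  show "\<exists>N. \<forall>n\<ge>N. norm (x n - 0) < r"
  proof (intro exI allI impI)
    fix n assume "N \<le> n"
    then have "\<bar>x n\<bar> \<le> C * (real A * e + T A)" by fact
    then show "norm (x n - 0) < r" using 1 2 by (simp add: distrib_left)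
  qed
qed

lemma tendsto_by_approximation:
  fixes x :: "nat \<Rightarrow> real" and y :: "nat \<Rightarrow> nat \<Rightarrow> real" and z T :: "nat \<Rightarrow> real"
  assumes T: "T \<longlonglongrightarrow> 0" and y: "\<And>A. (\<lambda>n. y A n) \<longlonglongrightarrow> z A"
    and close_seq: "\<And>A n. \<bar>x n - y A n\<bar> \<le> T A" and close_lim: "\<And>A. \<bar>l - z A\<bar> \<le> T A"
  shows "x \<longlonglongrightarrow> l"
proof (rule LIMSEQ_I)
  fix r :: real assume r: "0 < r"
  obtain A where A: "\<bar>T A\<bar> < r / 3" using LIMSEQ_D[OF T, of "r / 3"] r by auto
  obtain N where N: "\<And>n. N \<le> n \<Longrightarrow> \<bar>y A n - z A\<bar> < r / 3"
    using LIMSEQ_D[OF y, of "r / 3"] r by auto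
  show "\<exists>N. \<forall>n\<ge>N. norm (x n - l) < r"
  proof (intro exI allI impI)
    fix n assume "N \<le> n"
    then show "norm (x n - l) < r"
      using N[OF \<open>N \<le> n\<close>] A close_seq[of n A] close_lim[of A]
      by (simp only: real_norm_def abs_le_iff abs_less_iff) (elim conjE; intro conjI; linarith)
  qed
qed

section \<open>Continuous ramps and cut-offs\<close>

lemma abs_ramp_tendsto_indicator:
  fixes s w :: real
  shows "(\<lambda>m. min 1 (max 0 (real m * (\<bar>w\<bar> - s)))) \<longlonglongrightarrow> indicator {w. \<bar>w\<bar> > s} w"
proof (cases "\<bar>w\<bar> > s")
  case True
  obtain N where N: "1 / (\<bar>w\<bar> - s) < real N" using reals_Archimedean2 by blast
  have "\<forall>\<^sub>F m in sequentially. min 1 (max 0 (real m * (\<bar>w\<bar> - s))) = indicator {w. \<bar>w\<bar> > s} w"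
  proof (rule eventually_sequentiallyI[of N])
    fix m assume "N \<le> m"
    then have "1 / (\<bar>w\<bar> - s) < real m" using N by linarith
    then have "1 \<le> real m * (\<bar>w\<bar> - s)" using True by (simp add: field_simps)
    then show "min 1 (max 0 (real m * (\<bar>w\<bar> - s))) = indicator {w. \<bar>w\<bar> > s} w"
      using True by simp
  qed
  then show ?thesis by (rule tendsto_eventually)
next
  case False
  then show ?thesis by (simp add: mult_nonneg_nonpos)
qed

definition interval_ramp :: "real \<Rightarrow> real \<Rightarrow> nat \<Rightarrow> real \<Rightarrow> real" where
  "interval_ramp a b m x = min 1 (real (Suc m) * max 0 (min (x - a) (b - x)))"

lemma interval_ramp_measurable[measurable]: "interval_ramp a b m \<in> borel_measurable borel"
  unfolding interval_ramp_def by measurable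

lemma interval_ramp_continuous: "continuous_on UNIV (interval_ramp a b m)"
  unfolding interval_ramp_def by (intro continuous_intros)

lemma interval_ramp_bounds: "0 \<le> interval_ramp a b m x" "interval_ramp a b m x \<le> 1"
  unfolding interval_ramp_def by auto

lemma interval_ramp_outside: "x \<notin> {a<..<b} \<Longrightarrow> interval_ramp a b m x = 0"
proof -
  assume "x \<notin> {a<..<b}"
  then have "min (x - a) (b - x) \<le> 0" by auto
  then show ?thesis unfolding interval_ramp_def by simp
qed

lemma interval_ramp_mono: "m \<le> n \<Longrightarrow> interval_ramp a b m x \<le> interval_ramp a b n x"
  unfolding interval_ramp_def by (intro min.mono order_refl mult_right_mono) auto

lemma interval_ramp_SUP: "(SUP m. ennreal (interval_ramp a b m x)) = indicator {a<..<b} x"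
proof (cases "a < x \<and> x < b")
  case True
  define d where "d = min (x - a) (b - x)"
  have d: "0 < d" using True unfolding d_def by simp
  obtain N where N: "1 / d < real N" using reals_Archimedean2 by blast
  have "1 \<le> real (Suc N) * d" using N d by (simp add: field_simps)
  then have gN: "interval_ramp a b N x = 1" unfolding interval_ramp_def d_def[symmetric] using d by simp
  have "(SUP m. ennreal (interval_ramp a b m x)) = 1"
  proof (rule antisym)
    show "(SUP m. ennreal (interval_ramp a b m x)) \<le> 1"
      by (rule SUP_least) (auto simp: interval_ramp_def)
    show "1 \<le> (SUP m. ennreal (interval_ramp a b m x))"
      using SUP_upper[of N UNIV "\<lambda>m. ennreal (interval_ramp a b m x)"] gN by simp
  qed
  then show ?thesis using True by simp
next
  case False
  then show ?thesis by (simp add: interval_ramp_outside)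
qed

lemma nn_integral_interval_ramp_SUP:
  assumes "\<And>m. (\<lambda>x. ennreal (interval_ramp a b m (f x))) \<in> borel_measurable N"
  shows "(SUP m. \<integral>\<^sup>+x. ennreal (interval_ramp a b m (f x)) \<partial>N) = (\<integral>\<^sup>+x. indicator {a<..<b} (f x) \<partial>N)"
proof -
  have "incseq (\<lambda>m x. ennreal (interval_ramp a b m (f x)))"
    by (auto simp: incseq_def le_fun_def intro!: ennreal_leI interval_ramp_mono)
  from nn_integral_monotone_convergence_SUP[OF this assms] show ?thesis
    by (simp add: interval_ramp_SUP)
qed

definition cutoff :: "nat \<Rightarrow> real \<Rightarrow> real" where
  "cutoff A x = min 1 (max 0 (real A + 1 - \<bar>x\<bar>))"

lemma cutoff_continuous: "continuous_on UNIV (cutoff A)"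
  unfolding cutoff_def by (intro continuous_intros)

lemma cutoff_measurable[measurable]: "cutoff A \<in> borel_measurable borel"
  unfolding cutoff_def by measurable

lemma cutoff_bounds: "0 \<le> cutoff A x" "cutoff A x \<le> 1"
  unfolding cutoff_def by auto

lemma cutoff_one: "\<bar>x\<bar> \<le> real A \<Longrightarrow> cutoff A x = 1"
  unfolding cutoff_def by simp

lemma cutoff_zero: "x \<notin> {- (real A + 1)..real A + 1} \<Longrightarrow> cutoff A x = 0"
  unfolding cutoff_def by auto


section \<open>Integrable random variables and their tails\<close>

locale integrable_variable =
  fixes M :: "'w measure" and \<eta> :: "'w \<Rightarrow> real"
  assumes eta: "prob_space M" "\<eta> \<in> borel_measurable M" "(\<integral>\<^sup>+ w. ennreal (\<eta> w) \<partial>M) < \<infinity>"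
begin

interpretation M: prob_space M by (rule eta(1))

lemma exceedance_sets[measurable]: "{w \<in> space M. \<eta> w > s} \<in> sets M"
  using eta(2) by measurable

definition tau :: "real \<Rightarrow> real" where
  "tau s = measure M {w \<in> space M. \<eta> w > s}"

lemma tau_nonneg: "0 \<le> tau s" unfolding tau_def by simp

lemma tau_mono: "s \<le> s' \<Longrightarrow> tau s' \<le> tau s"
  unfolding tau_def by (rule M.finite_measure_mono) auto

lemma count_exceedances_le:
  "(\<Sum>j. indicator {w \<in> space M. \<eta> w > real j + 1} w :: ennreal) \<le> ennreal (\<eta> w)"
proof (rule suminf_le_const)
  fix n
  have "(\<Sum>j<n. indicator {w \<in> space M. \<eta> w > real j + 1} w :: ennreal)
      \<le> (\<Sum>j<n. (if real j + 1 < \<eta> w then 1 else 0))"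
    by (intro sum_mono) (auto simp: indicator_def)
  also have "\<dots> = of_nat (card {j \<in> {..<n}. real j + 1 < \<eta> w})"
    by (simp add: sum.If_cases; rule arg_cong[where f=card]; auto)
  also have "\<dots> \<le> of_nat (card {..<nat \<lfloor>\<eta> w\<rfloor>})"
    by (intro of_nat_mono card_mono) (auto, linarith)
  also have "\<dots> \<le> ennreal (\<eta> w)"
  proof (cases "\<eta> w \<ge> 0")
    case True
    then have "real (nat \<lfloor>\<eta> w\<rfloor>) \<le> \<eta> w" by linarith
    then show ?thesis using True by (simp add: ennreal_of_nat_eq_real_of_nat ennreal_leI)
  qed simp
  finally show "(\<Sum>j<n. indicator {w \<in> space M. \<eta> w > real j + 1} w :: ennreal) \<le> ennreal (\<eta> w)" .
qed auto

lemma tau_summable_at_integers: "summable (\<lambda>j. tau (real j + 1))"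
proof (rule summable_suminf_not_top)
  show "0 \<le> tau (real i + 1)" for i by (rule tau_nonneg)
  have "(\<Sum>j. ennreal (tau (real j + 1))) = (\<Sum>j. \<integral>\<^sup>+w. indicator {w \<in> space M. \<eta> w > real j + 1} w \<partial>M)"
    unfolding tau_def by (intro suminf_cong) (simp add: M.emeasure_eq_measure)
  also have "\<dots> = (\<integral>\<^sup>+w. (\<Sum>j. indicator {w \<in> space M. \<eta> w > real j + 1} w) \<partial>M)"
    by (intro nn_integral_suminf[symmetric]) simp
  also have "\<dots> \<le> (\<integral>\<^sup>+w. ennreal (\<eta> w) \<partial>M)"
    by (intro nn_integral_mono count_exceedances_le)
  also have "\<dots> < \<infinity>" by (rule eta(3))
  finally show "(\<Sum>j. ennreal (tau (real j + 1))) \<noteq> top" by simp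
qed

lemma tau_summable: "summable (\<lambda>m. tau (real m - c))"
proof -
  define N where "N = nat \<lceil>c\<rceil> + 1"
  have g: "summable (\<lambda>m. tau (real (m - N) + 1))"
    using tau_summable_at_integers summable_iff_shift[of "\<lambda>m. tau (real (m - N) + 1)" N] by simp
  show ?thesis
  proof (rule summable_comparison_test'[OF g])
    fix m assume "N \<le> m"
    then have "real (m - N) + 1 \<le> real m - c" unfolding N_def by (simp add: of_nat_diff) linarith
    then show "norm (tau (real m - c)) \<le> tau (real (m - N) + 1)"
      using tau_mono tau_nonneg by simp
  qed
qed

end


section \<open>Markov kernels and the renewal equation\<close>

locale markov_renewal =
  fixes P :: "real \<Rightarrow> real measure" and mu0 :: "real measure"
  assumes kernel: "P \<in> borel \<rightarrow>\<^sub>M prob_algebra borel"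
    and init: "prob_space mu0" "sets mu0 = sets borel"
begin

lemma P_subprob: "P \<in> borel \<rightarrow>\<^sub>M subprob_algebra borel"
  using kernel by (rule measurable_prob_algebraD)

lemma sets_P[simp]: "sets (P x) = sets borel"
  using P_subprob by (rule sets_kernel) simp

lemma prob_P: "prob_space (P x)"
  using measurable_space[OF kernel, of x] by (simp add: space_prob_algebra)

lemma kpow_subprob: "kpow P n \<in> borel \<rightarrow>\<^sub>M subprob_algebra borel"
  by (induction n) (auto intro: return_measurable measurable_bind2[OF P_subprob])

lemma kpow_prob: "kpow P n \<in> borel \<rightarrow>\<^sub>M prob_algebra borel"
  by (induction n) (auto intro: measurable_return_prob_space measurable_bind_prob_space[OF kernel])

lemma kpow_Suc_right: "kpow P (Suc n) x = kpow P n x \<bind> P"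
proof (induction n arbitrary: x)
  case 0
  have "P x \<bind> return borel = P x" by (rule bind_return'') simp
  moreover have "return borel x \<bind> P = P x" by (rule bind_return[OF P_subprob]) simp
  ultimately show ?case by simp
next
  case (Suc n)
  have "kpow P (Suc (Suc n)) x = P x \<bind> (\<lambda>y. kpow P n y \<bind> P)" using Suc by simp
  also have "\<dots> = (P x \<bind> kpow P n) \<bind> P"
    by (rule bind_assoc[symmetric, where N=borel and R=borel])
       (auto intro: kpow_subprob P_subprob simp: measurable_cong_sets[OF sets_P refl])
  finally show ?case by simp
qed

lemma sets_kpow[simp]: "sets (kpow P n x) = sets borel"
  using kpow_subprob by (rule sets_kernel) simp

lemma sets_law[simp]: "sets (law_at mu0 P n) = sets borel"
  unfolding law_at_def using sets_eq_imp_space_eq[OF init(2)] by (intro sets_bind) (auto simp: sets_kpow)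

lemma prob_law: "prob_space (law_at mu0 P n)"
  unfolding law_at_def using init
  by (intro prob_space_bind'[OF _ kpow_prob]) (simp add: space_prob_algebra)

lemma law_0: "law_at mu0 P 0 = mu0"
  unfolding law_at_def by (simp add: bind_return'' init kpow.simps(1)[abs_def] del: kpow.simps)

lemma law_Suc: "law_at mu0 P (Suc n) = law_at mu0 P n \<bind> P"
  unfolding law_at_def kpow_Suc_right
  by (rule bind_assoc[symmetric, where N=borel and R=borel])
     (auto intro: P_subprob simp: measurable_cong_sets[OF init(2) refl] kpow_subprob)

text \<open>The renewal measure is the mixture of the laws mu0 P^n over the counting
  measure on n; this representation gives its integrals.\<close>
lemma law_kernel: "(\<lambda>n. law_at mu0 P n) \<in> count_space UNIV \<rightarrow>\<^sub>M subprob_algebra borel"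
  by (auto simp: space_subprob_algebra prob_law prob_space_imp_subprob_space)

lemma renewal_mixture: "renewal mu0 P = count_space UNIV \<bind> (\<lambda>n. law_at mu0 P n)"
  (is "_ = ?V")
proof -
  have sets_V: "sets ?V = sets borel" by (rule sets_bind) auto
  have "renewal mu0 P = measure_of UNIV (sets borel) (emeasure ?V)"
    unfolding renewal_def
    by (rule measure_of_eq)
       (auto simp: emeasure_bind[OF _ law_kernel] nn_integral_count_space_nat sets.sigma_sets_eq[of borel, simplified])
  also have "\<dots> = ?V"
    using measure_of_of_measure[of ?V] sets_eq_imp_space_eq[OF sets_V] sets_V by simp
  finally show ?thesis .
qed

lemma sets_U[simp]: "sets (renewal mu0 P) = sets borel"
  by (simp add: renewal_mixture sets_bind)

lemma nn_integral_renewal: "f \<in> borel_measurable borel \<Longrightarrow>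
   (\<integral>\<^sup>+x. f x \<partial>renewal mu0 P) = (\<Sum>n. \<integral>\<^sup>+x. f x \<partial>law_at mu0 P n)"
  unfolding renewal_mixture by (simp add: nn_integral_bind[OF _ law_kernel] nn_integral_count_space_nat)

lemma renewal_equation:
  assumes f: "f \<in> borel_measurable borel"
  shows "(\<integral>\<^sup>+x. f x \<partial>renewal mu0 P) = (\<integral>\<^sup>+x. f x \<partial>mu0) + (\<integral>\<^sup>+y. (\<integral>\<^sup>+x. f x \<partial>P y) \<partial>renewal mu0 P)"
proof -
  have Pf: "(\<lambda>y. \<integral>\<^sup>+x. f x \<partial>P y) \<in> borel_measurable borel"
    using measurable_compose[OF P_subprob nn_integral_measurable_subprob_algebra[OF f]] .
  have step: "(\<integral>\<^sup>+x. f x \<partial>law_at mu0 P (Suc n)) = (\<integral>\<^sup>+y. (\<integral>\<^sup>+x. f x \<partial>P y) \<partial>law_at mu0 P n)" for n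
    unfolding law_Suc
    by (intro nn_integral_bind[OF f]) (auto simp: measurable_cong_sets[OF sets_law refl] P_subprob)
  have "(\<integral>\<^sup>+x. f x \<partial>renewal mu0 P) = (\<Sum>n. \<integral>\<^sup>+x. f x \<partial>law_at mu0 P (n + 1)) + (\<integral>\<^sup>+x. f x \<partial>law_at mu0 P 0)"
    unfolding nn_integral_renewal[OF f] by (subst suminf_offset[where i=1]) auto
  also have "\<dots> = (\<integral>\<^sup>+y. (\<integral>\<^sup>+x. f x \<partial>P y) \<partial>renewal mu0 P) + (\<integral>\<^sup>+x. f x \<partial>mu0)"
    by (simp add: step nn_integral_renewal[OF Pf] law_0)
  finally show ?thesis by (simp add: add.commute)
qed

end


locale renewal_limit = markov_renewal P mu0 + integrable_variable M \<eta>
  for P mu0 and M :: "'w measure" and \<eta> +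
  fixes F lam :: "real measure" and t :: "nat \<Rightarrow> real"
  assumes F: "prob_space F" "sets F = sets borel"
    and weak: "\<forall>f::real \<Rightarrow> real. continuous_on UNIV f \<and> bounded (range f) \<longrightarrow>
               ((\<lambda>x. \<integral>y. f (y - x) \<partial>(P x)) \<longlongrightarrow> (\<integral>z. f z \<partial>F)) at_top"
    and dom: "\<forall>x s. measure (P x) {y. \<bar>y - x\<bar> > s} \<le> measure M {w \<in> space M. \<eta> w > s}"
    and Ubound: "(SUP k::int. emeasure (renewal mu0 P) {real_of_int k<..real_of_int k + 1}) < \<infinity>"
    and tlim: "filterlim t at_top sequentially"
    and lam: "sets lam = sets borel" "\<forall>K. compact K \<longrightarrow> emeasure lam K < \<infinity>"
    and vague: "\<forall>f::real \<Rightarrow> real. continuous_on UNIV f \<and> compact (closure {x. f x \<noteq> 0}) \<longrightarrow>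
               (\<lambda>n. \<integral>x. f x \<partial>(shift_measure (renewal mu0 P) (t n))) \<longlonglongrightarrow> (\<integral>x. f x \<partial>lam)"
begin

abbreviation U :: "real measure" where "U \<equiv> renewal mu0 P"

interpretation F: prob_space F by (rule F(1))

lemma sets_F[measurable_cong, simp]: "sets F = sets borel" by (rule F(2))

lemma sets_lam[measurable_cong, simp]: "sets lam = sets borel" by (rule lam(1))

lemma sets_shift[measurable_cong, simp]: "sets (shift_measure N s) = sets borel"
  unfolding shift_measure_def by simp

definition unit_mass :: real where
  "unit_mass = enn2real (3 * (SUP k::int. emeasure U {real_of_int k<..real_of_int k + 1}))"

lemma unit_mass_bound: "0 \<le> unit_mass" "emeasure U {a..a+1} \<le> ennreal unit_mass"
proof -
  let ?C = "SUP k::int. emeasure U {real_of_int k<..real_of_int k + 1}"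
  have "emeasure U {a..a+1} \<le> 3 * ?C"
    by (rule emeasure_unit_interval_le) (auto intro: SUP_upper)
  moreover have "3 * ?C < \<infinity>" using Ubound by (simp add: ennreal_mult_less_top)
  ultimately show "emeasure U {a..a+1} \<le> ennreal unit_mass" by (simp add: unit_mass_def)
qed (simp add: unit_mass_def)

lemma translation_measurable[measurable]: "(\<lambda>x. x - s) \<in> borel_measurable U"
  by (simp add: measurable_cong_sets[OF sets_U refl])

lemma shift_unit_mass: "emeasure (shift_measure U s) {a..a+1} \<le> ennreal unit_mass"
proof -
  have "(\<lambda>x. x - s) -` {a..a+1} \<inter> space U = {a+s..(a+s)+1}"
    by (auto simp: sets_eq_imp_space_eq[OF sets_U])
  then show ?thesis unfolding shift_measure_def
    by (subst emeasure_distr) (auto intro: unit_mass_bound(2))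
qed

lemma integral_shift: "(f::real \<Rightarrow> real) \<in> borel_measurable borel \<Longrightarrow>
  (\<integral>x. f x \<partial>shift_measure U s) = (\<integral>x. f (x - s) \<partial>U)"
  unfolding shift_measure_def by (intro integral_distr) auto

lemma vague_limit:
  fixes f :: "real \<Rightarrow> real"
  assumes f: "continuous_on UNIV f" and supp: "\<And>x. x \<notin> {a..b} \<Longrightarrow> f x = 0"
  shows "(\<lambda>n. \<integral>x. f x \<partial>shift_measure U (t n)) \<longlonglongrightarrow> (\<integral>x. f x \<partial>lam)"
proof -
  have "{x. f x \<noteq> 0} \<subseteq> {a..b}" using supp by blast
  then have "compact (closure {x. f x \<noteq> 0})" by (simp add: bounded_subset[OF bounded_closed_interval])
  with f have "continuous_on UNIV f \<and> compact (closure {x. f x \<noteq> 0})" ..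
  then show ?thesis by (rule vague[rule_format])
qed

lemma lam_integrable:
  assumes f: "f \<in> borel_measurable borel" and B: "\<And>x. \<bar>f x\<bar> \<le> B"
    and supp: "\<And>x. x \<notin> {a..b} \<Longrightarrow> (f x::real) = 0"
  shows "integrable lam f"
proof (rule integrableI_bounded)
  show "f \<in> borel_measurable lam" using f by simp
  have "(\<integral>\<^sup>+x. ennreal (norm (f x)) \<partial>lam) \<le> (\<integral>\<^sup>+x. ennreal B * indicator {a..b} x \<partial>lam)"
    by (intro nn_integral_mono) (auto simp: B supp indicator_def ennreal_leI)
  also have "\<dots> = ennreal B * emeasure lam {a..b}"
    by (rule nn_integral_cmult_indicator) simp
  also have "\<dots> < \<infinity>" using lam(2) by (simp add: ennreal_mult_less_top)
  finally show "(\<integral>\<^sup>+x. ennreal (norm (f x)) \<partial>lam) < \<infinity>" .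
qed

lemma lam_unit_mass: "emeasure lam {a..a+1} \<le> ennreal (4 * unit_mass)"
proof -
  define f where "f = interval_ramp (a - 1) (a + 2) 0"
  have fc: "continuous_on UNIV f" unfolding f_def by (rule interval_ramp_continuous)
  have fm[measurable]: "f \<in> borel_measurable borel" unfolding f_def by simp
  have f01: "0 \<le> f x" "f x \<le> 1" "\<bar>f x\<bar> \<le> 1" for x unfolding f_def using interval_ramp_bounds by auto
  have fz: "x \<notin> {a - 1..a + 2} \<Longrightarrow> f x = 0" for x
    unfolding f_def using interval_ramp_outside[of x "a - 1" "a + 2"] by auto
  have bd: "(\<integral>x. f x \<partial>shift_measure U s) \<le> 4 * unit_mass" for s
  proof -
    have "\<bar>\<integral>x. f x \<partial>shift_measure U s\<bar> \<le> 2 * unit_mass * (real 2 * 1 + (\<Sum>m. (\<lambda>_. 0::real) (m + 2)))"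
    proof (rule integral_near_far_bound(2)[OF sets_shift shift_unit_mass unit_mass_bound(1) fm, where c="a + 1/2"])
      show "\<bar>f x\<bar> \<le> (\<lambda>_. 0) (nat \<lfloor>\<bar>x - (a + 1/2)\<bar>\<rfloor>)" if "real 2 \<le> \<bar>x - (a + 1/2)\<bar>" for x
        using that fz[of x] by (cases "x \<le> a + 1/2") auto
    qed (auto simp: f01)
    then show ?thesis by simp
  qed
  have I: "(\<integral>x. f x \<partial>lam) \<le> 4 * unit_mass"
    using vague_limit[OF fc, of "a - 1" "a + 2"] fz bd by (intro LIMSEQ_le_const2) auto
  have "emeasure lam {a..a+1} = (\<integral>\<^sup>+x. indicator {a..a+1} x \<partial>lam)" by simp
  also have "\<dots> \<le> (\<integral>\<^sup>+x. ennreal (f x) \<partial>lam)"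
    by (intro nn_integral_mono) (auto simp: indicator_def f_def interval_ramp_def)
  also have "\<dots> = ennreal (\<integral>x. f x \<partial>lam)"
    using f01(1) fz
    by (intro nn_integral_eq_integral lam_integrable[where a="a - 1" and b="a + 2", OF fm f01(3)]) auto
  also have "\<dots> \<le> ennreal (4 * unit_mass)" using I by (rule ennreal_leI)
  finally show ?thesis .
qed

lemma F_tail_le_tau: "measure F {w. \<bar>w\<bar> > s} \<le> tau s"
proof -
  define f where "f m w = min 1 (max 0 (real m * (\<bar>w\<bar> - s)))" for m :: nat and w :: real
  have fc: "continuous_on UNIV (f m)" for m unfolding f_def by (intro continuous_intros)
  have fm[measurable]: "f m \<in> borel_measurable borel" for m by (rule borel_measurable_continuous_onI[OF fc])
  have fb: "\<bar>f m w\<bar> \<le> 1" for m w unfolding f_def by auto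
  have f_ind: "f m w \<le> indicator {w. \<bar>w\<bar> > s} w" for m w
    unfolding f_def by (cases "s < \<bar>w\<bar>") (auto simp: indicator_def mult_nonneg_nonpos)
  have le: "(\<integral>w. f m w \<partial>F) \<le> tau s" for m
  proof (rule tendsto_upperbound)
    have "bounded (range (f m))" unfolding bounded_iff by (intro exI[of _ 1]) (auto simp: fb)
    then show "((\<lambda>x. \<integral>y. f m (y - x) \<partial>(P x)) \<longlongrightarrow> (\<integral>w. f m w \<partial>F)) at_top"
      using weak fc by blast
    show "\<forall>\<^sub>F x in at_top. (\<integral>y. f m (y - x) \<partial>(P x)) \<le> tau s"
    proof (intro always_eventually allI)
      fix x
      interpret Px: prob_space "P x" by (rule prob_P)
      have "(\<integral>y. f m (y - x) \<partial>(P x)) \<le> (\<integral>y. indicator {y. \<bar>y - x\<bar> > s} y \<partial>(P x))"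
        using f_ind fb by (intro integral_mono Px.integrable_const_bound[where B=1])
          (auto simp: indicator_def measurable_cong_sets[OF sets_P refl])
      also have "\<dots> = measure (P x) {y. \<bar>y - x\<bar> > s}"
        by (simp add: sets_eq_imp_space_eq[OF sets_P])
      also have "\<dots> \<le> tau s" using dom unfolding tau_def by blast
      finally show "(\<integral>y. f m (y - x) \<partial>(P x)) \<le> tau s" .
    qed
  qed simp
  have "(\<lambda>m. \<integral>w. f m w \<partial>F) \<longlonglongrightarrow> (\<integral>w. indicator {w. \<bar>w\<bar> > s} w \<partial>F)"
    using fb unfolding f_def
    by (intro integral_dominated_convergence[where w="\<lambda>_. 1"] AE_I2 abs_ramp_tendsto_indicator) auto
  then show ?thesis
    using le by (intro LIMSEQ_le_const2) (auto simp: sets_eq_imp_space_eq[OF sets_F])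
qed

end

section \<open>The argument for a fixed test function\<close>

locale test_function = renewal_limit +
  fixes g :: "real \<Rightarrow> real" and R G :: real
  assumes g_cont: "continuous_on UNIV g" and g_nonneg: "\<And>x. 0 \<le> g x" and g_le: "\<And>x. g x \<le> G"
    and g_supp: "\<And>x. \<bar>x\<bar> > R \<Longrightarrow> g x = 0"
begin

interpretation F: prob_space F by (rule F(1))

lemma g_meas[measurable]: "g \<in> borel_measurable borel"
  by (rule borel_measurable_continuous_onI[OF g_cont])

lemma g_abs_le: "\<bar>g x\<bar> \<le> G" using g_nonneg g_le by (simp add: abs_of_nonneg)

lemma G_nonneg: "0 \<le> G" using g_nonneg[of 0] g_le[of 0] by simp

text \<open>gF s = E g(s + xi): the test function smoothed by the limit jump law, so that
  lam(gF) = (lam * F)(g); and gP s y = E g(y + xi(y) - s), the one-step average.\<close>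
definition gF :: "real \<Rightarrow> real" where
  "gF s = (\<integral>w. g (s + w) \<partial>F)"

definition gP :: "real \<Rightarrow> real \<Rightarrow> real" where
  "gP s y = (\<integral>z. g (z - s) \<partial>P y)"

lemma gF_nonneg: "0 \<le> gF s" unfolding gF_def by (rule integral_nonneg_AE) (simp add: g_nonneg)

lemma gP_nonneg: "0 \<le> gP s y" unfolding gP_def by (rule integral_nonneg_AE) (simp add: g_nonneg)

lemma g_shift_integrable:
  assumes "prob_space N" "sets N = sets borel"
  shows "integrable N (\<lambda>z. g (z + a))"
proof -
  have "(\<lambda>z. g (z + a)) \<in> borel_measurable N"
    unfolding measurable_cong_sets[OF assms(2) refl] by measurable
  then show ?thesis by (rule prob_integral_abs_le(1)[OF assms(1)]) (rule g_abs_le)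
qed

lemma gF_integrable: "integrable F (\<lambda>w. g (s + w))"
  using g_shift_integrable[OF F, of s] by (simp add: add.commute)

lemma gP_integrable: "integrable (P y) (\<lambda>z. g (z - s))"
  using g_shift_integrable[OF prob_P[of y] sets_P[of y], of "- s"] by simp

lemma average_g_tail:
  assumes N: "prob_space N" "sets N = sets borel"
    and tail: "measure N {z. \<bar>z - y\<bar> > \<bar>y - s\<bar> - R - 1} \<le> tau (\<bar>y - s\<bar> - R - 1)"
  shows "(\<integral>z. g (z - s) \<partial>N) \<le> G * tau (\<bar>y - s\<bar> - R - 1)"
proof -
  interpret N: prob_space N by (rule N(1))
  let ?E = "{z. \<bar>z - y\<bar> > \<bar>y - s\<bar> - R - 1}"
  have "(\<integral>z. g (z - s) \<partial>N) \<le> (\<integral>z. G * indicator ?E z \<partial>N)"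
  proof (rule integral_mono)
    show "integrable N (\<lambda>z. g (z - s))" using g_shift_integrable[OF N, of "- s"] by simp
    show "integrable N (\<lambda>z. G * indicator ?E z)"
      by (intro N.integrable_const_bound[where B=G])
         (auto simp: G_nonneg indicator_def measurable_cong_sets[OF N(2) refl])
    show "g (z - s) \<le> G * indicator ?E z" for z
    proof (cases "z \<in> ?E")
      case False
      then have "\<bar>z - s\<bar> > R" by auto
      then show ?thesis using g_supp[of "z - s"] False by simp
    qed (simp add: g_le)
  qed
  also have "\<dots> = G * measure N ?E" by (simp add: sets_eq_imp_space_eq[OF N(2)] N(2))
  also have "\<dots> \<le> G * tau (\<bar>y - s\<bar> - R - 1)" by (intro mult_left_mono tail G_nonneg)
  finally show ?thesis .
qed

definition band :: "nat \<Rightarrow> real" where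
  "band m = G * tau (real m - (R + 1))"

lemma band_nonneg: "0 \<le> band m" unfolding band_def by (simp add: G_nonneg tau_nonneg)

lemma band_summable: "summable band" unfolding band_def by (intro summable_mult tau_summable)

lemma tau_le_band: "G * tau (\<bar>u\<bar> - R - 1) \<le> band (nat \<lfloor>\<bar>u\<bar>\<rfloor>)"
  unfolding band_def by (intro mult_left_mono tau_mono G_nonneg) linarith

lemma gP_band: "\<bar>gP s y\<bar> \<le> band (nat \<lfloor>\<bar>y - s\<bar>\<rfloor>)"
proof -
  have "gP s y \<le> G * tau (\<bar>y - s\<bar> - R - 1)"
    unfolding gP_def using dom by (intro average_g_tail[OF prob_P sets_P]) (simp add: tau_def)
  then show ?thesis using tau_le_band[of "y - s"] gP_nonneg[of s y] by simp
qed

lemma gF_band: "\<bar>gF (y - s)\<bar> \<le> band (nat \<lfloor>\<bar>y - s\<bar>\<rfloor>)"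
proof -
  have "gF (y - s) = (\<integral>z. g (z - (s - y)) \<partial>F)" unfolding gF_def by (simp add: algebra_simps)
  also have "\<dots> \<le> G * tau (\<bar>0 - (s - y)\<bar> - R - 1)"
    using F_tail_le_tau by (intro average_g_tail[OF F]) simp
  finally show ?thesis using tau_le_band[of "y - s"] gF_nonneg[of "y - s"] by (simp add: abs_minus_commute)
qed

text \<open>gF is continuous by dominated convergence, so it may be tested against the vague limit.\<close>
lemma gF_continuous: "continuous_on UNIV gF"
  unfolding continuous_on_eq_continuous_at[OF open_UNIV] continuous_at_sequentially comp_def
proof (intro ballI allI impI)
  fix s :: real and x :: "nat \<Rightarrow> real" assume x: "x \<longlonglongrightarrow> s"
  have "(\<lambda>n. g (x n + w)) \<longlonglongrightarrow> g (s + w)" for w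
    using g_cont x by (intro isCont_tendsto_compose[of _ g] tendsto_intros)
      (auto simp: continuous_on_eq_continuous_at)
  then show "(\<lambda>n. gF (x n)) \<longlonglongrightarrow> gF s" unfolding gF_def
    by (intro integral_dominated_convergence[where w="\<lambda>_. G"] AE_I2) (auto simp: g_abs_le)
qed

lemma gF_meas[measurable]: "gF \<in> borel_measurable borel"
  by (rule borel_measurable_continuous_onI[OF gF_continuous])

lemma gP_meas[measurable]: "gP s \<in> borel_measurable borel"
  unfolding gP_def
  using measurable_compose[OF P_subprob integral_measurable_subprob_algebra[of "\<lambda>z. g (z - s)" borel]]
  by simp

lemma gF_integrable_on:
  assumes N: "sets N = sets borel" and D: "\<And>a. emeasure N {a..a+1} \<le> ennreal D" and "0 \<le> D"
  shows "integrable N (\<lambda>y. gF (y - s))"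
  using assms by (intro integrable_distance_bands(1)[OF N D _ _ gF_band band_nonneg band_summable]) auto

lemma gP_integrable_U: "integrable U (gP s)"
  by (rule integrable_distance_bands(1)[OF sets_U unit_mass_bound(2,1) gP_meas gP_band band_nonneg band_summable])

lemma g_integrable_U: "integrable U (\<lambda>x. g (x - s))"
proof (rule integral_near_far_bound(1)[OF sets_U unit_mass_bound(2,1), where c=s and A="nat \<lceil>R\<rceil> + 1"
      and e=G and b="\<lambda>_. 0"])
  show "real (nat \<lceil>R\<rceil> + 1) \<le> \<bar>x - s\<bar> \<Longrightarrow> \<bar>g (x - s)\<bar> \<le> 0" for x
    using g_supp[of "x - s"] by linarith
qed (auto simp: g_abs_le G_nonneg)

lemma renewal_equation_g: "(\<integral>x. g (x - s) \<partial>U) = (\<integral>x. g (x - s) \<partial>mu0) + (\<integral>y. gP s y \<partial>U)"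
proof -
  have int0: "integrable mu0 (\<lambda>x. g (x - s))"
    using g_shift_integrable[OF init, of "- s"] by simp
  have "ennreal (\<integral>x. g (x - s) \<partial>U) = (\<integral>\<^sup>+x. ennreal (g (x - s)) \<partial>U)"
    by (rule nn_integral_eq_integral[OF g_integrable_U, symmetric]) (simp add: g_nonneg)
  also have "\<dots> = (\<integral>\<^sup>+x. ennreal (g (x - s)) \<partial>mu0) + (\<integral>\<^sup>+y. (\<integral>\<^sup>+x. ennreal (g (x - s)) \<partial>P y) \<partial>U)"
    by (rule renewal_equation) simp
  also have "\<dots> = ennreal (\<integral>x. g (x - s) \<partial>mu0) + ennreal (\<integral>y. gP s y \<partial>U)"
    unfolding gP_def
    by (simp add: nn_integral_eq_integral[OF int0] nn_integral_eq_integral[OF gP_integrable]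
        g_nonneg gP_def[symmetric] nn_integral_eq_integral[OF gP_integrable_U] gP_nonneg)
  also have "\<dots> = ennreal ((\<integral>x. g (x - s) \<partial>mu0) + (\<integral>y. gP s y \<partial>U))"
    by (rule ennreal_plus[symmetric]) (auto intro!: integral_nonneg_AE simp: g_nonneg gP_nonneg)
  finally show ?thesis
    by (subst (asm) ennreal_inj) (auto intro!: integral_nonneg_AE add_nonneg_nonneg simp: g_nonneg gP_nonneg)
qed

lemma initial_term_tendsto: "(\<lambda>n. \<integral>x. g (x - t n) \<partial>mu0) \<longlonglongrightarrow> 0"
proof -
  interpret mu0: prob_space mu0 by (rule init(1))
  have "(\<lambda>n. g (x - t n)) \<longlonglongrightarrow> 0" for x
  proof (rule tendsto_eventually)
    have "\<forall>\<^sub>F n in sequentially. t n \<ge> x + R + 1" using tlim by (simp add: filterlim_at_top)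
    then show "\<forall>\<^sub>F n in sequentially. g (x - t n) = 0"
      by eventually_elim (rule g_supp, linarith)
  qed
  then have "(\<lambda>n. \<integral>x. g (x - t n) \<partial>mu0) \<longlonglongrightarrow> (\<integral>x. 0 \<partial>mu0)"
    by (intro integral_dominated_convergence[where w="\<lambda>_. G"] AE_I2)
       (auto simp: g_abs_le measurable_cong_sets[OF init(2) refl])
  then show ?thesis by simp
qed

text \<open>g is uniformly continuous, being continuous with compact support.\<close>
lemma g_uniformly_continuous:
  assumes "0 < e" shows "\<exists>d>0. \<forall>a b. \<bar>a - b\<bar> < d \<longrightarrow> \<bar>g a - g b\<bar> < e"
proof -
  have "uniformly_continuous_on (cball 0 (R + 1)) g"
    by (rule compact_uniformly_continuous[OF continuous_on_subset[OF g_cont]]) auto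
  then obtain d1 where d1: "d1 > 0"
    "\<And>a b. a \<in> cball 0 (R+1) \<Longrightarrow> b \<in> cball 0 (R+1) \<Longrightarrow> dist b a < d1 \<Longrightarrow> dist (g b) (g a) < e"
    unfolding uniformly_continuous_on_def using assms by metis
  show ?thesis
  proof (intro exI[of _ "min d1 1"] conjI allI impI)
    fix a b :: real assume ab: "\<bar>a - b\<bar> < min d1 1"
    show "\<bar>g a - g b\<bar> < e"
    proof (cases "\<bar>a\<bar> > R \<and> \<bar>b\<bar> > R")
      case True then show ?thesis using g_supp assms by simp
    next
      case False
      then have "a \<in> cball 0 (R+1)" "b \<in> cball 0 (R+1)" using ab by (auto simp: dist_real_def)
      then show ?thesis using d1(2)[of b a] ab by (simp add: dist_real_def abs_minus_commute)
    qed
  qed (use d1 in simp)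
qed

text \<open>The weak convergence of the jumps is uniform over shifts s in a compact range:
  test at finitely many grid points and use the uniform continuity of g in between.\<close>
lemma uniform_weak_convergence:
  assumes e: "0 < e"
  shows "\<exists>Y. \<forall>y\<ge>Y. \<forall>s. \<bar>s\<bar> \<le> A \<longrightarrow> \<bar>(\<integral>z. g (s + (z - y)) \<partial>P y) - gF s\<bar> \<le> e"
proof -
  obtain d where d: "0 < d" "\<And>a b. \<bar>a - b\<bar> < d \<Longrightarrow> \<bar>g a - g b\<bar> < e / 3"
    using g_uniformly_continuous[of "e / 3"] e by auto
  define K where "K = nat \<lceil>2 * A / d\<rceil>"
  define si where "si i = - A + real i * d" for i :: nat
  have "((\<lambda>y. \<integral>z. g (si i + (z - y)) \<partial>P y) \<longlongrightarrow> gF (si i)) at_top" for i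
  proof -
    have "continuous_on UNIV (\<lambda>w. g (si i + w))"
      by (intro continuous_on_compose2[OF g_cont]) (auto intro!: continuous_intros)
    moreover have "bounded (range (\<lambda>w. g (si i + w)))"
      unfolding bounded_iff by (intro exI[of _ G]) (auto simp: g_abs_le)
    ultimately show ?thesis using weak unfolding gF_def by blast
  qed
  then have "\<forall>\<^sub>F y in at_top. \<forall>i\<in>{..K}. dist (\<integral>z. g (si i + (z - y)) \<partial>P y) (gF (si i)) < e / 3"
    using e by (intro eventually_ball_finite ballI tendstoD) auto
  then obtain Y where Y: "\<And>y i. Y \<le> y \<Longrightarrow> i \<le> K \<Longrightarrow> \<bar>(\<integral>z. g (si i + (z - y)) \<partial>P y) - gF (si i)\<bar> < e / 3"
    unfolding eventually_at_top_linorder dist_real_def by auto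
  show ?thesis
  proof (intro exI allI impI)
    fix y s assume y: "Y \<le> y" and s: "\<bar>s\<bar> \<le> A"
    obtain i where i: "i \<le> K" "\<bar>s - si i\<bar> < d"
      using grid_point_close[OF d(1) s] unfolding K_def si_def by auto
    have "\<bar>(\<integral>z. g (s + (z - y)) \<partial>P y) - (\<integral>z. g (si i + (z - y)) \<partial>P y)\<bar> \<le> e / 3"
      by (rule prob_average_shift_close[OF prob_P _ g_meas g_abs_le d(2) i(2)])
         (simp add: measurable_cong_sets[OF sets_P refl])
    moreover have "\<bar>gF (si i) - gF s\<bar> \<le> e / 3"
      using prob_average_shift_close[OF F(1) _ g_meas g_abs_le d(2), where s="si i" and s'=s and f="\<lambda>w. w"] i(2)
      by (simp add: gF_def abs_minus_commute)
    ultimately show "\<bar>(\<integral>z. g (s + (z - y)) \<partial>P y) - gF s\<bar> \<le> e"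
      using Y[OF y i(1)] by linarith
  qed
qed

text \<open>Replacing the one-step averages by the limit averages costs nothing in the limit:
  near the shift by uniform weak convergence, far from it by the band bounds.\<close>
lemma gP_minus_gF_tendsto: "(\<lambda>n. (\<integral>y. gP (t n) y \<partial>U) - (\<integral>y. gF (y - t n) \<partial>U)) \<longlonglongrightarrow> 0"
proof (rule tendsto_zero_two_parameters[where C="2 * unit_mass" and T="\<lambda>A. \<Sum>m. 2 * band (m + A)"])
  show "(\<lambda>A. \<Sum>m. 2 * band (m + A)) \<longlonglongrightarrow> 0"
    by (rule suminf_exist_split2) (intro summable_mult band_summable)
  show "0 \<le> 2 * unit_mass" using unit_mass_bound(1) by simp
  fix A :: nat and e :: real assume e: "0 < e"
  obtain Y where Y: "\<And>y s. Y \<le> y \<Longrightarrow> \<bar>s\<bar> \<le> real A \<Longrightarrow> \<bar>(\<integral>z. g (s + (z - y)) \<partial>P y) - gF s\<bar> \<le> e"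
    using uniform_weak_convergence[OF e, of "real A"] by auto
  have "\<forall>\<^sub>F n in sequentially. Y + real A \<le> t n" using tlim by (simp add: filterlim_at_top)
  then show "\<forall>\<^sub>F n in sequentially. \<bar>(\<integral>y. gP (t n) y \<partial>U) - (\<integral>y. gF (y - t n) \<partial>U)\<bar>
      \<le> 2 * unit_mass * (real A * e + (\<Sum>m. 2 * band (m + A)))"
  proof eventually_elim
    case (elim n)
    have near: "\<bar>gP (t n) y - gF (y - t n)\<bar> \<le> e" if "\<bar>y - t n\<bar> < real A" for y
      using Y[of y "y - t n"] that elim by (simp add: gP_def)
    have far: "\<bar>gP (t n) y - gF (y - t n)\<bar> \<le> 2 * band (nat \<lfloor>\<bar>y - t n\<bar>\<rfloor>)" for y
      using gP_band[of "t n" y] gF_band[of y "t n"] by linarith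
    have "\<bar>\<integral>y. gP (t n) y - gF (y - t n) \<partial>U\<bar> \<le> 2 * unit_mass * (real A * e + (\<Sum>m. 2 * band (m + A)))"
      using e band_nonneg band_summable
      by (intro integral_near_far_bound(2)[OF sets_U unit_mass_bound(2,1), where c="t n" and b="\<lambda>m. 2 * band m"]
          near far summable_mult) auto
    then show ?case by (simp add: gP_integrable_U gF_integrable_on[OF sets_U unit_mass_bound(2,1)])
  qed
qed

lemma gF_truncation:
  assumes N: "sets N = sets borel" and D: "\<And>a. emeasure N {a..a+1} \<le> ennreal D" and D0: "0 \<le> D"
  shows "\<bar>(\<integral>x. gF x \<partial>N) - (\<integral>x. gF x * cutoff A x \<partial>N)\<bar> \<le> 2 * D * (\<Sum>m. band (m + A))"
proof -
  have int1: "integrable N gF" using gF_integrable_on[OF N D D0, of 0] by simp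
  have int2: "integrable N (\<lambda>x. gF x * cutoff A x)"
    using gF_band[of _ 0] cutoff_bounds[of A] band_nonneg
    by (intro integrable_distance_bands(1)[OF N D D0 _ _ band_nonneg band_summable, where c=0])
       (auto simp: abs_mult intro: order_trans[OF mult_left_le])
  have "\<bar>\<integral>x. gF x - gF x * cutoff A x \<partial>N\<bar> \<le> 2 * D * (real A * 0 + (\<Sum>m. band (m + A)))"
  proof (rule integral_near_far_bound(2)[OF N D D0 _ _ order_refl _ band_nonneg band_summable, where c=0])
    show "\<bar>gF x - gF x * cutoff A x\<bar> \<le> 0" if "\<bar>x - 0\<bar> < real A" for x
      using that by (simp add: cutoff_one)
    show "\<bar>gF x - gF x * cutoff A x\<bar> \<le> band (nat \<lfloor>\<bar>x - 0\<bar>\<rfloor>)" for x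
    proof -
      have "gF x - gF x * cutoff A x = gF x * (1 - cutoff A x)" by (simp add: algebra_simps)
      then have "\<bar>gF x - gF x * cutoff A x\<bar> = \<bar>gF x\<bar> * (1 - cutoff A x)"
        using cutoff_bounds[of A x] by (simp add: abs_mult)
      also have "\<dots> \<le> \<bar>gF x\<bar>" using cutoff_bounds[of A x] by (simp add: mult_left_le)
      finally show ?thesis using gF_band[of x 0] by simp
    qed
  qed simp
  then show ?thesis using Bochner_Integration.integral_diff[OF int1 int2] by simp
qed

text \<open>U(gF(. - t_n)) converges to lam(gF): vague convergence for the truncations, and a
  uniform truncation error for U and for lam.\<close>
lemma gF_shift_tendsto: "(\<lambda>n. \<integral>x. gF x \<partial>shift_measure U (t n)) \<longlonglongrightarrow> (\<integral>x. gF x \<partial>lam)"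
proof (rule tendsto_by_approximation[where T="\<lambda>A. 8 * unit_mass * (\<Sum>m. band (m + A))"])
  show "(\<lambda>A. 8 * unit_mass * (\<Sum>m. band (m + A))) \<longlonglongrightarrow> 0"
    using tendsto_mult_right_zero[OF suminf_exist_split2[OF band_summable]] by simp
  have tail0: "0 \<le> (\<Sum>m. band (m + A))" for A
    using band_summable band_nonneg by (intro suminf_nonneg) auto
  fix A
  show "(\<lambda>n. \<integral>x. gF x * cutoff A x \<partial>shift_measure U (t n)) \<longlonglongrightarrow> (\<integral>x. gF x * cutoff A x \<partial>lam)"
    by (rule vague_limit[where a="- (real A + 1)" and b="real A + 1"])
       (auto intro!: continuous_intros gF_continuous cutoff_continuous simp: cutoff_zero)
  fix n
  have "\<bar>(\<integral>x. gF x \<partial>shift_measure U (t n)) - (\<integral>x. gF x * cutoff A x \<partial>shift_measure U (t n))\<bar>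
      \<le> 2 * unit_mass * (\<Sum>m. band (m + A))"
    by (rule gF_truncation[OF sets_shift shift_unit_mass unit_mass_bound(1)])
  also have "\<dots> \<le> 8 * unit_mass * (\<Sum>m. band (m + A))"
    using unit_mass_bound(1) tail0 by (intro mult_right_mono) auto
  finally show "\<bar>(\<integral>x. gF x \<partial>shift_measure U (t n)) - (\<integral>x. gF x * cutoff A x \<partial>shift_measure U (t n))\<bar>
      \<le> 8 * unit_mass * (\<Sum>m. band (m + A))" .
  show "\<bar>(\<integral>x. gF x \<partial>lam) - (\<integral>x. gF x * cutoff A x \<partial>lam)\<bar> \<le> 8 * unit_mass * (\<Sum>m. band (m + A))"
    using gF_truncation[OF sets_lam lam_unit_mass, of A] unit_mass_bound(1) by simp
qed

lemma lam_test_identity: "(\<integral>x. g x \<partial>lam) = (\<integral>x. gF x \<partial>lam)"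
proof -
  have split: "(\<integral>x. g x \<partial>shift_measure U (t n)) = (\<integral>x. g (x - t n) \<partial>mu0)
      + ((\<integral>y. gP (t n) y \<partial>U) - (\<integral>y. gF (y - t n) \<partial>U)) + (\<integral>x. gF x \<partial>shift_measure U (t n))" for n
    using renewal_equation_g[of "t n"] integral_shift[OF g_meas] integral_shift[OF gF_meas] by simp
  have "(\<lambda>n. \<integral>x. g x \<partial>shift_measure U (t n)) \<longlonglongrightarrow> 0 + 0 + (\<integral>x. gF x \<partial>lam)"
    unfolding split by (intro tendsto_add initial_term_tendsto gP_minus_gF_tendsto gF_shift_tendsto)
  moreover have "(\<lambda>n. \<integral>x. g x \<partial>shift_measure U (t n)) \<longlonglongrightarrow> (\<integral>x. g x \<partial>lam)"
    using g_supp by (intro vague_limit[OF g_cont, of "- R" R]) auto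
  ultimately show ?thesis using LIMSEQ_unique by fastforce
qed

end


section \<open>From test functions to the convolution identity\<close>

context renewal_limit
begin

interpretation F: prob_space F by (rule F(1))

lemma interval_ramp_test_function:
  "test_function P mu0 M \<eta> F lam t (interval_ramp a b m) (max \<bar>a\<bar> \<bar>b\<bar>) 1"
proof (rule test_function.intro[OF renewal_limit_axioms], unfold_locales)
  show "interval_ramp a b m x = 0" if "max \<bar>a\<bar> \<bar>b\<bar> < \<bar>x\<bar>" for x
    using that by (intro interval_ramp_outside) auto
qed (auto simp: interval_ramp_continuous interval_ramp_bounds)

lemma ramp_convolution_identity:
  "(\<integral>\<^sup>+x. ennreal (interval_ramp a b m x) \<partial>lam)
     = (\<integral>\<^sup>+y. (\<integral>\<^sup>+w. ennreal (interval_ramp a b m (y + w)) \<partial>F) \<partial>lam)"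
proof -
  interpret g: test_function P mu0 M \<eta> F lam t "interval_ramp a b m" "max \<bar>a\<bar> \<bar>b\<bar>" 1
    by (rule interval_ramp_test_function)
  have inner: "(\<integral>\<^sup>+w. ennreal (interval_ramp a b m (y + w)) \<partial>F) = ennreal (g.gF y)" for y
    unfolding g.gF_def using g.gF_integrable g.g_nonneg by (intro nn_integral_eq_integral) auto
  have supp: "interval_ramp a b m x = 0" if "x \<notin> {- max \<bar>a\<bar> \<bar>b\<bar>..max \<bar>a\<bar> \<bar>b\<bar>}" for x
    using that by (intro interval_ramp_outside) auto
  have "(\<integral>\<^sup>+x. ennreal (interval_ramp a b m x) \<partial>lam) = ennreal (\<integral>x. interval_ramp a b m x \<partial>lam)"
    using g.g_nonneg g.g_abs_le supp
    by (intro nn_integral_eq_integral lam_integrable[where a="- max \<bar>a\<bar> \<bar>b\<bar>" and b="max \<bar>a\<bar> \<bar>b\<bar>" and B=1])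
       auto
  also have "\<dots> = ennreal (\<integral>y. g.gF y \<partial>lam)" by (simp add: g.lam_test_identity)
  also have "\<dots> = (\<integral>\<^sup>+y. ennreal (g.gF y) \<partial>lam)"
    using g.gF_integrable_on[OF sets_lam lam_unit_mass, of 0] unit_mass_bound(1) g.gF_nonneg
    by (intro nn_integral_eq_integral[symmetric]) auto
  finally show ?thesis by (simp add: inner)
qed

lemma emeasure_translate:
  assumes B: "B \<in> sets borel"
  shows "emeasure F ((\<lambda>b. b - y) ` B) = (\<integral>\<^sup>+w. indicator B (y + w) \<partial>F)"
proof -
  have "(\<lambda>b. b - y) ` B = (\<lambda>w. y + w) -` B \<inter> space borel"
    by (auto intro: rev_image_eqI[of "y + _"])
  moreover have "(\<lambda>w. y + w) -` B \<inter> space borel \<in> sets F"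
    using measurable_sets[OF _ B, of "\<lambda>w. y + w" borel] by simp
  moreover have "indicator B (y + w) = (indicator ((\<lambda>w. y + w) -` B \<inter> space borel) w :: ennreal)" for w
    by (simp add: indicator_def)
  ultimately show ?thesis by simp
qed

text \<open>lam and lam * F agree on open intervals: let the ramps increase to the indicator
  on both sides of the ramp identity.\<close>
lemma lam_open_interval: "emeasure lam {a<..<b} = conv_meas lam F {a<..<b}"
proof -
  have inner_meas: "(\<lambda>y. \<integral>\<^sup>+w. ennreal (interval_ramp a b m (y + w)) \<partial>F) \<in> borel_measurable lam" for m
    by measurable
  have "emeasure lam {a<..<b} = (SUP m. \<integral>\<^sup>+x. ennreal (interval_ramp a b m x) \<partial>lam)"
    using nn_integral_interval_ramp_SUP[of a b "\<lambda>x. x" lam] by simp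
  also have "\<dots> = (SUP m. \<integral>\<^sup>+y. (\<integral>\<^sup>+w. ennreal (interval_ramp a b m (y + w)) \<partial>F) \<partial>lam)"
    by (simp only: ramp_convolution_identity)
  also have "\<dots> = (\<integral>\<^sup>+y. (SUP m. \<integral>\<^sup>+w. ennreal (interval_ramp a b m (y + w)) \<partial>F) \<partial>lam)"
    using inner_meas
    by (intro nn_integral_monotone_convergence_SUP[symmetric])
       (auto simp: incseq_def le_fun_def intro!: nn_integral_mono ennreal_leI interval_ramp_mono)
  also have "\<dots> = (\<integral>\<^sup>+y. (\<integral>\<^sup>+w. indicator {a<..<b} (y + w) \<partial>F) \<partial>lam)"
    by (simp add: nn_integral_interval_ramp_SUP[of a b "\<lambda>w. _ + w" F])
  also have "\<dots> = conv_meas lam F {a<..<b}"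
    unfolding conv_meas_def by (simp add: emeasure_translate)
  finally show ?thesis .
qed

definition lam_conv_F :: "real measure" where
  "lam_conv_F = distr (lam \<Otimes>\<^sub>M F) borel (\<lambda>(y, w). y + w)"

text \<open>By Fubini, lam_conv_F has exactly the masses prescribed by conv_meas.\<close>
lemma emeasure_lam_conv_F:
  assumes B: "B \<in> sets borel"
  shows "emeasure lam_conv_F B = conv_meas lam F B"
proof -
  have add: "(\<lambda>(y, w). y + w) \<in> (lam \<Otimes>\<^sub>M F) \<rightarrow>\<^sub>M (borel :: real measure)" by measurable
  let ?X = "(\<lambda>(y, w). y + w) -` B \<inter> space (lam \<Otimes>\<^sub>M F)"
  have X: "?X \<in> sets (lam \<Otimes>\<^sub>M F)" using add B by (rule measurable_sets)
  have sp: "space (lam \<Otimes>\<^sub>M F) = UNIV"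
    by (simp add: space_pair_measure sets_eq_imp_space_eq[OF sets_lam] sets_eq_imp_space_eq[OF sets_F])
  have "emeasure lam_conv_F B = emeasure (lam \<Otimes>\<^sub>M F) ?X"
    unfolding lam_conv_F_def by (rule emeasure_distr[OF add B])
  also have "\<dots> = (\<integral>\<^sup>+y. emeasure F (Pair y -` ?X) \<partial>lam)"
    by (rule F.emeasure_pair_measure_alt[OF X])
  also have "\<dots> = conv_meas lam F B" unfolding conv_meas_def sp
    by (intro nn_integral_cong arg_cong[where f="emeasure F"]) (auto intro: rev_image_eqI[of "_ + _"])
  finally show ?thesis .
qed

text \<open>Open intervals generate the Borel sets and lam is finite on the exhausting
  intervals (-i, i), so agreement there gives lam = lam * F.\<close>
lemma lam_eq_lam_conv_F: "lam = lam_conv_F"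
proof (rule measure_eqI_generator_eq[where \<Omega>=UNIV and E="range (\<lambda>(a, b). box a b)"
      and A="\<lambda>i. box (- real i) (real i)"])
  show "Int_stable (range (\<lambda>(a, b). box a (b::real)))"
  proof (rule Int_stableI)
    fix X Y assume "X \<in> range (\<lambda>(a, b). box a (b::real))" "Y \<in> range (\<lambda>(a, b). box a (b::real))"
    then obtain a b c d where "X = {a<..<b}" "Y = {c<..<d}" by auto
    then have "X \<inter> Y = box (max a c) (min b d)" by auto
    then show "X \<inter> Y \<in> range (\<lambda>(a, b). box a b)" by auto
  qed
  show "range (\<lambda>(a, b). box a (b::real)) \<subseteq> Pow UNIV" by simp
  fix X assume "X \<in> range (\<lambda>(a, b). box a (b::real))"
  then obtain a b where "X = {a<..<b}" by auto
  then show "emeasure lam X = emeasure lam_conv_F X"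
    using lam_open_interval emeasure_lam_conv_F by simp
next
  have "sets (borel :: real measure) = sigma_sets UNIV (range (\<lambda>(a, b). box a b))"
    by (subst borel_eq_box) (simp add: sets_measure_of)
  then show "sets lam = sigma_sets UNIV (range (\<lambda>(a, b). box a b))"
    "sets lam_conv_F = sigma_sets UNIV (range (\<lambda>(a, b). box a b))"
    by (simp_all add: lam_conv_F_def)
  show "range (\<lambda>i. box (- real i) (real i)) \<subseteq> range (\<lambda>(a, b). box a b)" by auto
  have "x \<in> box (- real (nat \<lceil>\<bar>x\<bar>\<rceil> + 1)) (real (nat \<lceil>\<bar>x\<bar>\<rceil> + 1))" for x :: real
    by (auto simp: box_real) linarith+
  then show "(\<Union>i. box (- real i) (real i)) = (UNIV :: real set)" by blast
  fix i :: nat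
  have "emeasure lam (box (- real i) (real i)) \<le> emeasure lam {- real i..real i}"
    by (intro emeasure_mono) (auto simp: box_real)
  also have "\<dots> < \<infinity>" using lam(2) by simp
  finally show "emeasure lam (box (- real i) (real i)) \<noteq> \<infinity>" by simp
qed

end


theorem lemma1:
  fixes P :: "real \<Rightarrow> real measure" and mu0 F lam :: "real measure"
    and M :: "'w measure" and \<eta> :: "'w \<Rightarrow> real" and t :: "nat \<Rightarrow> real"
  assumes kernel: "P \<in> borel \<rightarrow>\<^sub>M prob_algebra borel"
    and init: "prob_space mu0" "sets mu0 = sets borel"
    and green: "\<forall>k::int. (SUP y. \<Sum>n. emeasure (kpow P n y) {real_of_int k<..real_of_int k + 1}) < \<infinity>"
    and F: "prob_space F" "sets F = sets borel"
    and weak: "\<forall>f::real \<Rightarrow> real. continuous_on UNIV f \<and> bounded (range f) \<longrightarrow>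
               ((\<lambda>x. \<integral>y. f (y - x) \<partial>(P x)) \<longlongrightarrow> (\<integral>z. f z \<partial>F)) at_top"
    and eta: "prob_space M" "\<eta> \<in> borel_measurable M" "(\<integral>\<^sup>+ w. ennreal (\<eta> w) \<partial>M) < \<infinity>"
    and dom: "\<forall>x s. measure (P x) {y. \<bar>y - x\<bar> > s} \<le> measure M {w \<in> space M. \<eta> w > s}"
    and Ubound: "(SUP k::int. emeasure (renewal mu0 P) {real_of_int k<..real_of_int k + 1}) < \<infinity>"
    and tlim: "filterlim t at_top sequentially"
    and lam: "sets lam = sets borel" "\<forall>K. compact K \<longrightarrow> emeasure lam K < \<infinity>"
    and vague: "\<forall>f::real \<Rightarrow> real. continuous_on UNIV f \<and> compact (closure {x. f x \<noteq> 0}) \<longrightarrow>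
               (\<lambda>n. \<integral>x. f x \<partial>(shift_measure (renewal mu0 P) (t n))) \<longlonglongrightarrow> (\<integral>x. f x \<partial>lam)"
  shows "\<forall>B \<in> sets borel. emeasure lam B = conv_meas lam F B"
proof -
  interpret renewal_limit P mu0 M \<eta> F lam t
    by (intro renewal_limit.intro markov_renewal.intro integrable_variable.intro renewal_limit_axioms.intro)
       (fact kernel init eta F weak dom Ubound tlim lam vague)+
  show ?thesis using lam_eq_lam_conv_F emeasure_lam_conv_F by simp
qed

end
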